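(* For all $X,Y\in\mathcal C$, $X\cap Y=\mathrm{cl}(\{\Delta\mathbin{;}\Delta'\mid\Delta\in X,\ \Delta'\in Y\})$.
   Context: Formulas of BI: $\varphi,\psi ::= \top \mid \bot \mid \varphi\wedge\psi \mid \varphi\vee\psi \mid \varphi\to\psi \mid \mathsf{emp} \mid \varphi\ast\psi \mid \varphi -\!\!\ast\, \psi \mid a$, $a\in\mathrm{Atom}$. Bunches are finite binary trees whose leaves are formulas or empty bunches $\varnothing_m,\varnothing_a$ and whose internal nodes are labelled by the multiplicative comma ($\Delta_1\mathbin{,}\Delta_2$) or the additive semicolon ($\Delta_1\mathbin{;}\Delta_2$). A bunched context $\Delta(-)$ is a bunch with one leaf replaced by a hole; $\Delta(\Gamma)$ fills it with $\Gamma$. Bunch equivalence $\equiv$ is the least equivalence relation making $\mathbin{,}$ commutative, associative with unit $\varnothing_m$, $\mathbin{;}$ commutative, associative with unit $\varnothing_a$, and closed under contexts; $\mathrm{Bunch}$ is the set of bunches modulo $\equiv$. The cut-free BI sequent calculus ($\Delta\vdash_{\mathsf{cf}}\varphi$) has the rules: (ax) $a\vdash a$ for atoms $a$; (equiv) from $\Delta'\vdash\varphi$, $\Delta\equiv\Delta'$ infer $\Delta\vdash\varphi$; (W;) from $\Delta(\Delta_1)\vdash\varphi$ infer $\Delta(\Delta_1\mathbin{;}\Delta_2)\vdash\varphi$; (C;) from $\Delta(\Delta_1\mathbin{;}\Delta_1)\vdash\varphi$ infer $\Delta(\Delta_1)\vdash\varphi$; (empR) $\varnothing_m\vdash\mathsf{emp}$;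 (empL) from $\Delta(\varnothing_m)\vdash\varphi$ infer $\Delta(\mathsf{emp})\vdash\varphi$; ($\ast$R) from $\Delta_1\vdash\varphi$, $\Delta_2\vdash\psi$ infer $\Delta_1\mathbin{,}\Delta_2\vdash\varphi\ast\psi$; ($\ast$L) from $\Delta(\varphi\mathbin{,}\psi)\vdash\chi$ infer $\Delta(\varphi\ast\psi)\vdash\chi$; ($-\!\ast$R) from $\Delta\mathbin{,}\varphi\vdash\psi$ infer $\Delta\vdash\varphi-\!\!\ast\,\psi$; ($-\!\ast$L) from $\Delta_1\vdash\varphi$, $\Delta(\Delta_2\mathbin{,}\psi)\vdash\chi$ infer $\Delta((\Delta_1\mathbin{,}\Delta_2)\mathbin{,}(\varphi-\!\!\ast\,\psi))\vdash\chi$; ($\top$R) $\varnothing_a\vdash\top$; ($\top$L) from $\Delta(\varnothing_a)\vdash\varphi$ infer $\Delta(\top)\vdash\varphi$; ($\wedge$R) from $\Delta_1\vdash\varphi$, $\Delta_2\vdash\psi$ infer $\Delta_1\mathbin{;}\Delta_2\vdash\varphi\wedge\psi$; ($\wedge$L) from $\Delta(\varphi\mathbin{;}\psi)\vdash\chi$ infer $\Delta(\varphi\wedge\psi)\vdash\chi$; ($\to$R) from $\Delta\mathbin{;}\varphi\vdash\psi$ infer $\Delta\vdash\varphi\to\psi$; ($\to$L) from $\Delta_1\vdash\varphi$, $\Delta(\Delta_2\mathbin{;}\psi)\vdash\chi$ infer $\Delta((\Delta_1\mathbin{;}\Delta_2)\mathbin{;}(\varphi\to\psi))\vdash\chi$;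 ($\bot$L) $\Delta(\bot)\vdash\varphi$; ($\vee$R1/2) from $\Delta\vdash\varphi$ (resp. $\Delta\vdash\psi$) infer $\Delta\vdash\varphi\vee\psi$; ($\vee$L) from $\Delta(\varphi)\vdash\chi$, $\Delta(\psi)\vdash\chi$ infer $\Delta(\varphi\vee\psi)\vdash\chi$. (No cut rule.) For a formula $\varphi$, $[\![\varphi]\!]^{\mathrm{out}}=\{\Delta\in\mathrm{Bunch}\mid\Delta\vdash_{\mathsf{cf}}\varphi\}$. For $X\subseteq\mathrm{Bunch}$, $\mathrm{cl}(X)=\bigcap\{[\![\varphi]\!]^{\mathrm{out}}\mid X\subseteq[\![\varphi]\!]^{\mathrm{out}}\}$, and $\mathcal C=\{X\subseteq\mathrm{Bunch}\mid X=\mathrm{cl}(X)\}$. *)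

theory Defs
  imports Main
begin

datatype 'a fml =
    FTop | FBot | FAnd "'a fml" "'a fml" | FOr "'a fml" "'a fml" | FImp "'a fml" "'a fml"
  | FEmp | FStar "'a fml" "'a fml" | FWand "'a fml" "'a fml" | FAtom 'a

datatype 'a rbunch =
    BFml "'a fml"
  | BEmpM            \<comment> \<open>multiplicative empty bunch\<close>
  | BEmpA            \<comment> \<open>additive empty bunch\<close>
  | BComma "'a rbunch" "'a rbunch"
  | BSemi "'a rbunch" "'a rbunch"

datatype 'a bctx =
    Hole
  | CCommaL "'a bctx" "'a rbunch"
  | CCommaR "'a rbunch" "'a bctx"
  | CSemiL "'a bctx" "'a rbunch"
  | CSemiR "'a rbunch" "'a bctx"

primrec fill :: "'a bctx \<Rightarrow> 'a rbunch \<Rightarrow> 'a rbunch" where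
  "fill Hole G = G"
| "fill (CCommaL C D) G = BComma (fill C G) D"
| "fill (CCommaR D C) G = BComma D (fill C G)"
| "fill (CSemiL C D) G = BSemi (fill C G) D"
| "fill (CSemiR D C) G = BSemi D (fill C G)"

inductive beq :: "'a rbunch \<Rightarrow> 'a rbunch \<Rightarrow> bool" where
  beq_refl: "beq D D"
| beq_sym: "beq D E \<Longrightarrow> beq E D"
| beq_trans: "beq D E \<Longrightarrow> beq E F \<Longrightarrow> beq D F"
| comma_comm: "beq (BComma D E) (BComma E D)"
| comma_assoc: "beq (BComma (BComma D E) F) (BComma D (BComma E F))"
| comma_unit: "beq (BComma D BEmpM) D"
| semi_comm: "beq (BSemi D E) (BSemi E D)"
| semi_assoc: "beq (BSemi (BSemi D E) F) (BSemi D (BSemi E F))"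
| semi_unit: "beq (BSemi D BEmpA) D"
| beq_ctx: "beq D E \<Longrightarrow> beq (fill C D) (fill C E)"

lemma equivp_beq: "equivp beq"
  by (rule equivpI; auto simp: reflp_def symp_def transp_def
      intro: beq_refl beq_sym beq_trans)

quotient_type 'a bunch = "'a rbunch" / beq
  by (rule equivp_beq)

inductive cf :: "'a rbunch \<Rightarrow> 'a fml \<Rightarrow> bool" where
  ax: "cf (BFml (FAtom a)) (FAtom a)"
| equiv: "cf D' p \<Longrightarrow> beq D D' \<Longrightarrow> cf D p"
| weakSemi: "cf (fill C D1) p \<Longrightarrow> cf (fill C (BSemi D1 D2)) p"
| contrSemi: "cf (fill C (BSemi D1 D1)) p \<Longrightarrow> cf (fill C D1) p"
| empR: "cf BEmpM FEmp"
| empL: "cf (fill C BEmpM) p \<Longrightarrow> cf (fill C (BFml FEmp)) p"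
| starR: "cf D1 p \<Longrightarrow> cf D2 q \<Longrightarrow> cf (BComma D1 D2) (FStar p q)"
| starL: "cf (fill C (BComma (BFml p) (BFml q))) r \<Longrightarrow> cf (fill C (BFml (FStar p q))) r"
| wandR: "cf (BComma D (BFml p)) q \<Longrightarrow> cf D (FWand p q)"
| wandL: "cf D1 p \<Longrightarrow> cf (fill C (BComma D2 (BFml q))) r \<Longrightarrow>
          cf (fill C (BComma (BComma D1 D2) (BFml (FWand p q)))) r"
| topR: "cf BEmpA FTop"
| topL: "cf (fill C BEmpA) p \<Longrightarrow> cf (fill C (BFml FTop)) p"
| andR: "cf D1 p \<Longrightarrow> cf D2 q \<Longrightarrow> cf (BSemi D1 D2) (FAnd p q)"
| andL: "cf (fill C (BSemi (BFml p) (BFml q))) r \<Longrightarrow> cf (fill C (BFml (FAnd p q))) r"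
| impR: "cf (BSemi D (BFml p)) q \<Longrightarrow> cf D (FImp p q)"
| impL: "cf D1 p \<Longrightarrow> cf (fill C (BSemi D2 (BFml q))) r \<Longrightarrow>
          cf (fill C (BSemi (BSemi D1 D2) (BFml (FImp p q)))) r"
| botL: "cf (fill C (BFml FBot)) p"
| orR1: "cf D p \<Longrightarrow> cf D (FOr p q)"
| orR2: "cf D q \<Longrightarrow> cf D (FOr p q)"
| orL: "cf (fill C (BFml p)) r \<Longrightarrow> cf (fill C (BFml q)) r \<Longrightarrow> cf (fill C (BFml (FOr p q))) r"

definition out :: "'a fml \<Rightarrow> 'a bunch set" where
  "out p = {abs_bunch D | D. cf D p}"

definition cl :: "'a bunch set \<Rightarrow> 'a bunch set" where
  "cl X = \<Inter> {out p | p. X \<subseteq> out p}"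

definition closedC :: "'a bunch set set" where
  "closedC = {X. X = cl X}"

definition semi_set :: "'a bunch set \<Rightarrow> 'a bunch set \<Rightarrow> 'a bunch set" where
  "semi_set X Y = {abs_bunch (BSemi D D') | D D'. abs_bunch D \<in> X \<and> abs_bunch D' \<in> Y}"

end

theory Submission
  imports Defs
begin

text \<open>Every closed set is closed under additive weakening (on either side), so
  \<open>semi_set X Y \<subseteq> X \<inter> Y\<close> and hence \<open>cl (semi_set X Y) \<subseteq> X \<inter> Y\<close>. Conversely a
  bunch \<open>\<Delta> \<in> X \<inter> Y\<close> yields \<open>\<Delta> ; \<Delta> \<in> semi_set X Y\<close>, and additive contraction
  brings every formula proved from \<open>\<Delta> ; \<Delta>\<close> back to \<open>\<Delta>\<close>.\<close>

lemma abs_bunch_eq_iff: "abs_bunch D = abs_bunch E \<longleftrightarrow> beq D E"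
  by (metis Quotient3_rel[OF Quotient3_bunch] equivp_beq equivp_reflp)

lemma bunch_cases_abs: obtains D where "x = abs_bunch D"
  by (metis Quotient3_abs_rep[OF Quotient3_bunch])

lemma abs_bunch_in_out_iff: "abs_bunch D \<in> out p \<longleftrightarrow> cf D p"
proof
  assume "abs_bunch D \<in> out p"
  then obtain E where "abs_bunch D = abs_bunch E" "cf E p"
    unfolding out_def by blast
  then show "cf D p"
    using abs_bunch_eq_iff cf.equiv by metis
qed (auto simp: out_def)

lemma abs_bunch_semi_commute: "abs_bunch (BSemi D E) = abs_bunch (BSemi E D)"
  by (simp add: abs_bunch_eq_iff semi_comm)

lemma cf_weaken_semi: "cf D p \<Longrightarrow> cf (BSemi D E) p"
  using cf.weakSemi[where C = Hole] by simp

lemma cf_contract_semi: "cf (BSemi D D) p \<Longrightarrow> cf D p"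
  using cf.contrSemi[where C = Hole] by simp

lemma mem_cl_iff: "z \<in> cl X \<longleftrightarrow> (\<forall>p. X \<subseteq> out p \<longrightarrow> z \<in> out p)"
  unfolding cl_def by blast

lemma cl_mono: "S \<subseteq> X \<Longrightarrow> cl S \<subseteq> cl X"
  unfolding cl_def by blast

lemma cl_subset_closedC: "S \<subseteq> X \<Longrightarrow> X \<in> closedC \<Longrightarrow> cl S \<subseteq> X"
  using cl_mono unfolding closedC_def by blast

lemma closedC_weaken_semi:
  assumes "X \<in> closedC" and "abs_bunch D \<in> X"
  shows "abs_bunch (BSemi D E) \<in> X"
proof -
  have "abs_bunch (BSemi D E) \<in> cl X"
    unfolding mem_cl_iff
    using assms(2) abs_bunch_in_out_iff cf_weaken_semi by blast
  with assms(1) show ?thesis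
    unfolding closedC_def by blast
qed

lemma semi_set_subset_closedC:
  assumes "X \<in> closedC" and "Y \<in> closedC"
  shows "semi_set X Y \<subseteq> X \<inter> Y"
proof
  fix z assume "z \<in> semi_set X Y"
  then obtain D E where z: "z = abs_bunch (BSemi D E)"
    and "abs_bunch D \<in> X" and "abs_bunch E \<in> Y"
    unfolding semi_set_def by blast
  then have "abs_bunch (BSemi D E) \<in> X" and "abs_bunch (BSemi E D) \<in> Y"
    using closedC_weaken_semi assms by blast+
  then show "z \<in> X \<inter> Y"
    using z abs_bunch_semi_commute by (metis IntI)
qed

lemma cl_contract_semi:
  assumes "abs_bunch (BSemi D D) \<in> S"
  shows "abs_bunch D \<in> cl S"
  unfolding mem_cl_iff
  using assms abs_bunch_in_out_iff cf_contract_semi by blast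

lemma inter_subset_cl_semi_set: "X \<inter> Y \<subseteq> cl (semi_set X Y)"
proof
  fix z assume "z \<in> X \<inter> Y"
  moreover obtain D where "z = abs_bunch D"
    by (rule bunch_cases_abs)
  ultimately have "abs_bunch (BSemi D D) \<in> semi_set X Y"
    unfolding semi_set_def by blast
  with \<open>z = abs_bunch D\<close> show "z \<in> cl (semi_set X Y)"
    using cl_contract_semi by blast
qed

theorem proposition6p3:
  fixes X Y :: "'a bunch set"
  assumes "X \<in> closedC" and "Y \<in> closedC"
  shows "X \<inter> Y = cl (semi_set X Y)"
proof
  have "cl (semi_set X Y) \<subseteq> X" and "cl (semi_set X Y) \<subseteq> Y"
    using semi_set_subset_closedC[OF assms] cl_subset_closedC assms by blast+
  then show "cl (semi_set X Y) \<subseteq> X \<inter> Y"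
    by blast
qed (rule inter_subset_cl_semi_set)

end
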